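(* There is an absolute constant $C$ such that the following holds for all positive integers $n$. Let $w=\lfloor0.4n\rfloor$, and let integers $i\ne j$ and $k=i+j$ satisfy $|i|,|j|\le2w$ and $|k|\le w$. Then $R_i\cup R_j\cup L_k$ Schur embeds into $\{1,3,4\}\times\{0,1,\dots,\lfloor0.15n\rfloor+C\}$.
   Context: $R=\{(x,y)\in\mathbb{R}^2:0.7n\le x+y\le n,\ |x-y|\le0.8n\}$, $L=\{(x,y)\in\mathbb{R}^2:2\lceil0.7n\rceil\le x+y\le1.7n,\ |x-y|\le0.4n\}$. Fibers: $R_j=\{(x,y)\in\mathbb{Z}^2\cap R:x-y=j\}$ for $|j|\le 2w$ and $L_k=\{(x,y)\in\mathbb{Z}^2\cap L:x-y=k\}$ for $|k|\le w$. A set $X_1\subset\mathbb{Z}^2$ Schur embeds into $X_2\subset\mathbb{Z}^2$ if there is an injection $f:X_1\to X_2$ such that for all $a,b,c\in X_1$, $a+b=c$ if and only if $f(a)+f(b)=f(c)$ (coordinatewise addition). *)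

theory Defs
  imports Complex_Main
begin

definition padd :: "int \<times> int \<Rightarrow> int \<times> int \<Rightarrow> int \<times> int" where
  "padd a b = (fst a + fst b, snd a + snd b)"

definition schur_embeds :: "(int \<times> int) set \<Rightarrow> (int \<times> int) set \<Rightarrow> bool" where
  "schur_embeds X1 X2 \<longleftrightarrow> (\<exists>f. inj_on f X1 \<and> f ` X1 \<subseteq> X2 \<and>
     (\<forall>a\<in>X1. \<forall>b\<in>X1. \<forall>c\<in>X1. padd a b = c \<longleftrightarrow> padd (f a) (f b) = f c))"

definition Rreg :: "nat \<Rightarrow> (real \<times> real) set" where
  "Rreg n = {(x,y). 0.7 * real n \<le> x + y \<and> x + y \<le> real n \<and> \<bar>x - y\<bar> \<le> 0.8 * real n}"

definition Lreg :: "nat \<Rightarrow> (real \<times> real) set" where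
  "Lreg n = {(x,y). 2 * of_int \<lceil>0.7 * real n\<rceil> \<le> x + y \<and> x + y \<le> 1.7 * real n
                    \<and> \<bar>x - y\<bar> \<le> 0.4 * real n}"

definition Rfib :: "nat \<Rightarrow> int \<Rightarrow> (int \<times> int) set" where
  "Rfib n j = {(x,y). (real_of_int x, real_of_int y) \<in> Rreg n \<and> x - y = j}"

definition Lfib :: "nat \<Rightarrow> int \<Rightarrow> (int \<times> int) set" where
  "Lfib n k = {(x,y). (real_of_int x, real_of_int y) \<in> Lreg n \<and> x - y = k}"

end

theory Submission
  imports Defs
begin

text \<open>
Each point of a fiber x - y = d is determined by its y-coordinate. Send R_i, R_j and L_{i+j}
to the lines with first coordinate 1, 3 and 4, shifting y by offsets s_i, s_j and s_i + s_j.
In the domain the level x + y separates the pieces (0.7n to n on R, 1.4n to 1.7n on L), so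
a + b = c forces c into L_{i+j} and, as i \<noteq> j, one of a, b into each of R_i and R_j; in the image
1 + 3 = 4 is the only Schur triple in {1, 3, 4}. Either way the relation reduces to an equation
between y-coordinates, which the offsets respect. On every fiber y ranges over an interval of
length 0.15n, so offsets can be chosen that put the image into {1, 3, 4} \<times> {0, ..., \<lfloor>0.15n\<rfloor> + 2}.
\<close>

lemma padd_commute: "padd a b = padd b a"
  by (simp add: padd_def add.commute)

lemma padd_eq_iff: "padd (a1, a2) (b1, b2) = (c1, c2) \<longleftrightarrow> a1 + b1 = c1 \<and> a2 + b2 = c2"
  by (simp add: padd_def)

definition diagonal_embedding ::
    "(int \<times> int) set \<Rightarrow> (int \<times> int) set \<Rightarrow> int \<Rightarrow> int \<Rightarrow> int \<times> int \<Rightarrow> int \<times> int" where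
  "diagonal_embedding A B oA oB p =
     (if p \<in> A then (1, snd p - oA) else if p \<in> B then (3, snd p - oB) else (4, snd p - oA - oB))"

locale diagonal_triple =
  fixes A B D :: "(int \<times> int) set" and i j :: int and lo hi lo' hi' :: real
  assumes distinct_diagonals: "i \<noteq> j"
    and diagonal_A: "(x, y) \<in> A \<Longrightarrow> x - y = i"
    and diagonal_B: "(x, y) \<in> B \<Longrightarrow> x - y = j"
    and diagonal_D: "(x, y) \<in> D \<Longrightarrow> x - y = i + j"
    and level_AB: "(x, y) \<in> A \<union> B \<Longrightarrow> lo \<le> of_int (x + y) \<and> of_int (x + y) \<le> hi"
    and level_D: "(x, y) \<in> D \<Longrightarrow> lo' \<le> of_int (x + y) \<and> of_int (x + y) \<le> hi'"
    and lo_le_hi: "lo \<le> hi"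
    and double_AB_above: "hi < 2 * lo"
    and D_above_AB: "hi < lo'"
    and D_plus_AB_above: "hi' < lo + lo'"
begin

lemma disjoint: "A \<inter> B = {}" "A \<inter> D = {}" "B \<inter> D = {}"
proof -
  show "A \<inter> B = {}"
    using distinct_diagonals by (force dest: diagonal_A diagonal_B)
  have "p \<notin> D" if "p \<in> A \<union> B" for p
    using that D_above_AB by (cases p) (fastforce dest!: level_AB level_D)
  then show "A \<inter> D = {}" "B \<inter> D = {}"
    by blast+
qed

lemma level_ge_lo:
  assumes "(x, y) \<in> A \<union> B \<union> D"
  shows "lo \<le> of_int (x + y)"
  using assms level_AB[of x y] level_D[of x y] lo_le_hi D_above_AB by auto

lemma sum_in_union_cases:
  assumes "a \<in> A \<union> B \<union> D" "b \<in> A \<union> B \<union> D" "c \<in> A \<union> B \<union> D" "padd a b = c"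
  shows "c \<in> D \<and> (a \<in> A \<and> b \<in> B \<or> a \<in> B \<and> b \<in> A)"
proof -
  obtain a1 a2 b1 b2 where pts: "a = (a1, a2)" "b = (b1, b2)"
    by (cases a, cases b)
  have c: "c = (a1 + b1, a2 + b2)"
    using assms(4) by (simp add: pts padd_def)
  have level_c: "of_int (a1 + b1 + (a2 + b2)) = real_of_int (a1 + a2) + of_int (b1 + b2)"
    by simp
  have la: "lo \<le> of_int (a1 + a2)" and lb: "lo \<le> of_int (b1 + b2)"
    using level_ge_lo assms(1,2) unfolding pts by blast+
  have "c \<notin> A \<union> B"
    using level_AB[of "a1 + b1" "a2 + b2"] level_c la lb double_AB_above by (auto simp: c)
  with assms(3) have cD: "c \<in> D" by blast
  have "a \<notin> D" "b \<notin> D"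
    using level_D[of "a1 + b1" "a2 + b2"] level_D[of a1 a2] level_D[of b1 b2] level_c la lb
      D_plus_AB_above cD by (auto simp: c pts)
  with assms(1,2) have ab: "a \<in> A \<union> B" "b \<in> A \<union> B" by blast+
  have "a \<notin> A \<or> b \<notin> A" "a \<notin> B \<or> b \<notin> B"
    using diagonal_D[of "a1 + b1" "a2 + b2"] diagonal_A[of a1 a2] diagonal_A[of b1 b2]
      diagonal_B[of a1 a2] diagonal_B[of b1 b2] cD distinct_diagonals by (auto simp: c pts)
  with ab cD show ?thesis by blast
qed

context
  fixes oA oB :: int
begin

abbreviation "emb \<equiv> diagonal_embedding A B oA oB"

lemma embedding_cases:
  assumes "p \<in> A \<union> B \<union> D"
  obtains "p \<in> A" "emb p = (1, snd p - oA)" "fst p = snd p + i"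
    | "p \<in> B" "emb p = (3, snd p - oB)" "fst p = snd p + j"
    | "p \<in> D" "emb p = (4, snd p - oA - oB)" "fst p = snd p + i + j"
proof -
  from assms consider "p \<in> A" | "p \<in> B" | "p \<in> D" by blast
  then show thesis
  proof cases
    case 1
    with diagonal_A[of "fst p" "snd p"] show thesis
      by (intro that(1)) (simp_all add: diagonal_embedding_def)
  next
    case 2
    with diagonal_B[of "fst p" "snd p"] disjoint(1) show thesis
      by (intro that(2)) (auto simp: diagonal_embedding_def)
  next
    case 3
    with diagonal_D[of "fst p" "snd p"] disjoint(2,3) show thesis
      by (intro that(3)) (auto simp: diagonal_embedding_def)
  qed
qed

lemma inj_on_embedding: "inj_on emb (A \<union> B \<union> D)"
proof (rule inj_on_inverseI)
  fix p assume "p \<in> A \<union> B \<union> D"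
  then show "(\<lambda>(t, u). if t = 1 then (u + oA + i, u + oA) else if t = 3 then (u + oB + j, u + oB)
      else (u + oA + oB + i + j, u + oA + oB)) (emb p) = p"
    by (elim embedding_cases; simp; metis prod.collapse)
qed

lemma embedding_fst:
  assumes "p \<in> A \<union> B \<union> D"
  shows "fst (emb p) \<in> {1, 3, 4}" "fst (emb p) = 1 \<longleftrightarrow> p \<in> A" "fst (emb p) = 3 \<longleftrightarrow> p \<in> B"
    "fst (emb p) = 4 \<longleftrightarrow> p \<in> D"
  using assms disjoint by (elim embedding_cases; auto)+

lemma embedding_sum_iff:
  assumes "a \<in> A" "b \<in> B" "c \<in> D"
  shows "padd (emb a) (emb b) = emb c \<longleftrightarrow> padd a b = c"
proof -
  have "a \<in> A \<union> B \<union> D" "b \<in> A \<union> B \<union> D" "c \<in> A \<union> B \<union> D"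
    using assms by blast+
  then obtain "emb a = (1, snd a - oA)" "fst a = snd a + i"
      and "emb b = (3, snd b - oB)" "fst b = snd b + j"
      and "emb c = (4, snd c - oA - oB)" "fst c = snd c + i + j"
    using assms disjoint by (elim embedding_cases) blast+
  then show ?thesis
    by (cases a, cases b, cases c) (auto simp: padd_eq_iff)
qed

lemma embedding_reflects_sums:
  assumes "a \<in> A \<union> B \<union> D" "b \<in> A \<union> B \<union> D" "c \<in> A \<union> B \<union> D"
    and "padd (emb a) (emb b) = emb c"
  shows "padd a b = c"
proof -
  have "fst (emb a) + fst (emb b) = fst (emb c)"
    using assms(4) by (simp add: padd_def prod_eq_iff)
  with embedding_fst(1)[OF assms(1)] embedding_fst(1)[OF assms(2)] embedding_fst(1)[OF assms(3)]
  have "fst (emb a) = 1 \<and> fst (emb b) = 3 \<or> fst (emb a) = 3 \<and> fst (emb b) = 1" "fst (emb c) = 4"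
    by auto
  then have "a \<in> A \<and> b \<in> B \<or> a \<in> B \<and> b \<in> A" "c \<in> D"
    using embedding_fst[OF assms(1)] embedding_fst[OF assms(2)] embedding_fst[OF assms(3)] by blast+
  then show ?thesis
    using assms(4) embedding_sum_iff[of a b c] embedding_sum_iff[of b a c] padd_commute[of "emb a"]
      padd_commute[of a] by auto
qed

lemma embedding_preserves_sums:
  assumes "a \<in> A \<union> B \<union> D" "b \<in> A \<union> B \<union> D" "c \<in> A \<union> B \<union> D"
    and "padd a b = c"
  shows "padd (emb a) (emb b) = emb c"
  using sum_in_union_cases[OF assms] assms(4) embedding_sum_iff[of a b c] embedding_sum_iff[of b a c]
    padd_commute[of "emb a"] padd_commute[of a] by auto

lemma schur_embeds_strip:
  assumes "\<And>p. p \<in> A \<Longrightarrow> snd p - oA \<in> {0..h}"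
    and "\<And>p. p \<in> B \<Longrightarrow> snd p - oB \<in> {0..h}"
    and "\<And>p. p \<in> D \<Longrightarrow> snd p - oA - oB \<in> {0..h}"
  shows "schur_embeds (A \<union> B \<union> D) ({1, 3, 4} \<times> {0..h})"
  unfolding schur_embeds_def
proof (intro exI conjI ballI)
  show "emb ` (A \<union> B \<union> D) \<subseteq> {1, 3, 4} \<times> {0..h}"
  proof
    fix q assume "q \<in> emb ` (A \<union> B \<union> D)"
    then obtain p where "p \<in> A \<union> B \<union> D" "q = emb p" by blast
    then show "q \<in> {1, 3, 4} \<times> {0..h}"
      by (elim embedding_cases) (use assms in auto)
  qed
qed (use inj_on_embedding embedding_reflects_sums embedding_preserves_sums in blast)+

end

end

lemma shifted_coordinate_bounds:
  fixes y d s e :: int and lo h :: real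
  assumes "lo \<le> of_int (2 * y + d)" "of_int (2 * y + d) \<le> lo + 2 * h"
    and "of_int s \<le> (lo - of_int d) / 2" "(lo - of_int d) / 2 < of_int (s + e)"
  shows "y - s \<in> {0 .. \<lfloor>h\<rfloor> + e}"
proof -
  have "real_of_int s \<le> of_int y"
    using assms(1,3) by simp
  moreover have "y - s - e \<le> \<lfloor>h\<rfloor>"
    using assms(2,4) by (simp add: le_floor_iff)
  ultimately show ?thesis
    by simp
qed

lemma Rfib_iff:
  "(x, y) \<in> Rfib n j \<longleftrightarrow> 0.7 * real n \<le> of_int (x + y) \<and> of_int (x + y) \<le> real n
     \<and> \<bar>of_int (x - y)\<bar> \<le> 0.8 * real n \<and> x - y = j"
  by (auto simp: Rfib_def Rreg_def)

lemma Lfib_level: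
  assumes "(x, y) \<in> Lfib n k"
  shows "1.4 * real n \<le> of_int (x + y)" "of_int (x + y) \<le> 1.7 * real n" "x - y = k"
proof -
  have "2 * of_int \<lceil>0.7 * real n\<rceil> \<le> real_of_int (x + y)" "of_int (x + y) \<le> 1.7 * real n" "x - y = k"
    using assms by (auto simp: Lfib_def Lreg_def)
  moreover have "0.7 * real n \<le> of_int \<lceil>0.7 * real n\<rceil>"
    by (rule le_of_int_ceiling)
  ultimately show "1.4 * real n \<le> of_int (x + y)" "of_int (x + y) \<le> 1.7 * real n" "x - y = k"
    by linarith+
qed

lemma diagonal_triple_fibers:
  assumes "n > 0" "i \<noteq> j"
  shows "diagonal_triple (Rfib n i) (Rfib n j) (Lfib n (i + j)) i j
           (0.7 * real n) (real n) (1.4 * real n) (1.7 * real n)"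
  using assms by unfold_locales (auto simp: Rfib_iff dest: Lfib_level)

definition fiber_offset :: "nat \<Rightarrow> int \<Rightarrow> int" where
  "fiber_offset n d = \<lfloor>(0.7 * real n - of_int d) / 2\<rfloor>"

lemma fiber_offset_bounds:
  "of_int (fiber_offset n d) \<le> (0.7 * real n - of_int d) / 2"
  "(0.7 * real n - of_int d) / 2 < of_int (fiber_offset n d + 1)"
  unfolding fiber_offset_def by linarith+

lemma Rfib_shifted_range:
  assumes "(x, y) \<in> Rfib n d"
  shows "y - fiber_offset n d \<in> {0 .. \<lfloor>0.15 * real n\<rfloor> + 1}"
proof -
  have "0.7 * real n \<le> of_int (2 * y + d)" "of_int (2 * y + d) \<le> 0.7 * real n + 2 * (0.15 * real n)"
    using assms by (auto simp: Rfib_iff)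
  from shifted_coordinate_bounds[OF this fiber_offset_bounds] show ?thesis .
qed

lemma Lfib_shifted_range:
  assumes "(x, y) \<in> Lfib n (i + j)"
  shows "y - (fiber_offset n i + fiber_offset n j) \<in> {0 .. \<lfloor>0.15 * real n\<rfloor> + 2}"
proof (rule shifted_coordinate_bounds)
  show "1.4 * real n \<le> of_int (2 * y + (i + j))"
    "of_int (2 * y + (i + j)) \<le> 1.4 * real n + 2 * (0.15 * real n)"
    using Lfib_level[OF assms] by simp_all
  show "of_int (fiber_offset n i + fiber_offset n j) \<le> (1.4 * real n - of_int (i + j)) / 2"
    "(1.4 * real n - of_int (i + j)) / 2 < of_int (fiber_offset n i + fiber_offset n j + 2)"
    using fiber_offset_bounds[of n i] fiber_offset_bounds[of n j] by simp_all
qed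

theorem mainTheorem8:
  shows "\<exists>C::nat. \<forall>n::nat. n > 0 \<longrightarrow>
     (\<forall>i j k :: int. i \<noteq> j \<longrightarrow> k = i + j \<longrightarrow>
        \<bar>i\<bar> \<le> 2 * \<lfloor>0.4 * real n\<rfloor> \<longrightarrow> \<bar>j\<bar> \<le> 2 * \<lfloor>0.4 * real n\<rfloor> \<longrightarrow>
        \<bar>k\<bar> \<le> \<lfloor>0.4 * real n\<rfloor> \<longrightarrow>
        schur_embeds (Rfib n i \<union> Rfib n j \<union> Lfib n k)
                     ({1, 3, 4} \<times> {0 .. \<lfloor>0.15 * real n\<rfloor> + int C}))"
proof (intro exI[of _ 2] allI impI)
  fix n :: nat and i j k :: int
  assume "n > 0" "i \<noteq> j" "k = i + j"
  interpret diagonal_triple "Rfib n i" "Rfib n j" "Lfib n (i + j)" i j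
      "0.7 * real n" "real n" "1.4 * real n" "1.7 * real n"
    using \<open>n > 0\<close> \<open>i \<noteq> j\<close> by (rule diagonal_triple_fibers)
  have "schur_embeds (Rfib n i \<union> Rfib n j \<union> Lfib n (i + j)) ({1, 3, 4} \<times> {0 .. \<lfloor>0.15 * real n\<rfloor> + 2})"
    by (rule schur_embeds_strip[where oA = "fiber_offset n i" and oB = "fiber_offset n j"])
      (force dest: Rfib_shifted_range Lfib_shifted_range simp: diff_diff_eq)+
  with \<open>k = i + j\<close> show "schur_embeds (Rfib n i \<union> Rfib n j \<union> Lfib n k)
      ({1, 3, 4} \<times> {0 .. \<lfloor>0.15 * real n\<rfloor> + int 2})"
    by simp
qed

end
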